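(* Let $V=V_1\oplus V_2\oplus V_3$ and $R=\mathcal{O}(V)^{\mathrm{SL}_2(\mathbb{C})}$. Then $R$ has no homogeneous system of parameters with degrees $2,3,3,4,4,5$.
   Context: $V_k$ is the $\mathrm{SL}_2(\mathbb{C})$-module of complex binary forms of degree $k$; $R$ is the graded algebra of invariant polynomial functions on $V$. A homogeneous system of parameters is a set of algebraically independent homogeneous elements of positive degree over whose generated subalgebra $R$ is integral. *)

theory Defs
  imports Complex_Main
begin

text \<open>Points of V = V_1 + V_2 + V_3 are coefficient families x (k,i), k in {1,2,3},
  0 <= i <= k, where x (k,i) is the coefficient of X^(k-i) Y^i of the binary
  form of degree k.\<close>

definition coords :: "(nat \<times> nat) set" where
  "coords = {(k, i). k \<in> {1, 2, 3} \<and> i \<le> k}"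

definition Vspace :: "(nat \<times> nat \<Rightarrow> complex) set" where
  "Vspace = {x. \<forall>p. p \<notin> coords \<longrightarrow> x p = 0}"

definition mono :: "(nat \<times> nat \<Rightarrow> nat) \<Rightarrow> (nat \<times> nat \<Rightarrow> complex) \<Rightarrow> complex" where
  "mono e x = (\<Prod>p\<in>coords. x p ^ e p)"

definition mdeg :: "(nat \<times> nat \<Rightarrow> nat) \<Rightarrow> nat" where
  "mdeg e = (\<Sum>p\<in>coords. e p)"

definition poly_fun :: "((nat \<times> nat \<Rightarrow> complex) \<Rightarrow> complex) \<Rightarrow> bool" where
  "poly_fun F \<longleftrightarrow> (\<exists>M c. finite M \<and> (\<forall>x\<in>Vspace. F x = (\<Sum>e\<in>M. c e * mono e x)))"

definition homog :: "nat \<Rightarrow> ((nat \<times> nat \<Rightarrow> complex) \<Rightarrow> complex) \<Rightarrow> bool" where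
  "homog d F \<longleftrightarrow> (\<exists>M c. finite M \<and> (\<forall>e\<in>M. mdeg e = d) \<and>
      (\<forall>x\<in>Vspace. F x = (\<Sum>e\<in>M. c e * mono e x)))"

text \<open>SL_2(C), with g = (a,b,c,d) standing for the matrix [[a,b],[c,d]].\<close>

definition SL2 :: "(complex \<times> complex \<times> complex \<times> complex) set" where
  "SL2 = {(a, b, c, d). a * d - b * c = 1}"

text \<open>Action of g on binary forms by substitution:
  (g.f)(X,Y) = f(aX + bY, cX + dY). The new coefficient of X^(k-j) Y^j is
  computed by expanding (aX+bY)^(k-i) (cX+dY)^i.\<close>

definition act :: "complex \<times> complex \<times> complex \<times> complex \<Rightarrow>
    (nat \<times> nat \<Rightarrow> complex) \<Rightarrow> (nat \<times> nat \<Rightarrow> complex)" where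
  "act g x = (\<lambda>(k, j). case g of (a, b, c, d) \<Rightarrow>
     if (k, j) \<in> coords then
       (\<Sum>i\<le>k. x (k, i) * (\<Sum>p\<le>j.
          of_nat ((k - i) choose p) * of_nat (i choose (j - p)) *
          a ^ (k - i - p) * b ^ p * c ^ (i - (j - p)) * d ^ (j - p)))
     else 0)"

definition invariant :: "((nat \<times> nat \<Rightarrow> complex) \<Rightarrow> complex) \<Rightarrow> bool" where
  "invariant F \<longleftrightarrow> poly_fun F \<and> (\<forall>g\<in>SL2. \<forall>x\<in>Vspace. F (act g x) = F x)"

definition gen_alg :: "nat \<Rightarrow> (nat \<Rightarrow> (nat \<times> nat \<Rightarrow> complex) \<Rightarrow> complex)
    \<Rightarrow> ((nat \<times> nat \<Rightarrow> complex) \<Rightarrow> complex) set" where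
  "gen_alg n f = {F. \<exists>M c. finite M \<and>
      (\<forall>x\<in>Vspace. F x = (\<Sum>e\<in>M. c e * (\<Prod>i<n. f i x ^ e i)))}"

definition alg_indep :: "nat \<Rightarrow> (nat \<Rightarrow> (nat \<times> nat \<Rightarrow> complex) \<Rightarrow> complex) \<Rightarrow> bool" where
  "alg_indep n f \<longleftrightarrow> (\<forall>M c. finite M \<longrightarrow> (\<forall>e\<in>M. \<forall>i\<ge>n. e i = 0) \<longrightarrow>
      (\<forall>x\<in>Vspace. (\<Sum>e\<in>M. c e * (\<Prod>i<n. f i x ^ e i)) = 0) \<longrightarrow>
      (\<forall>e\<in>M. c e = (0::complex)))"

definition integral_over :: "nat \<Rightarrow> (nat \<Rightarrow> (nat \<times> nat \<Rightarrow> complex) \<Rightarrow> complex) \<Rightarrow> bool" where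
  "integral_over n f \<longleftrightarrow> (\<forall>h. invariant h \<longrightarrow>
      (\<exists>m::nat. \<exists>A. m \<ge> 1 \<and> (\<forall>j<m. A j \<in> gen_alg n f) \<and>
        (\<forall>x\<in>Vspace. h x ^ m + (\<Sum>j<m. A j x * h x ^ j) = 0)))"

definition hsop_degrees :: "nat list \<Rightarrow> (nat \<Rightarrow> (nat \<times> nat \<Rightarrow> complex) \<Rightarrow> complex) \<Rightarrow> bool" where
  "hsop_degrees ds f \<longleftrightarrow>
     (\<forall>i<length ds. invariant (f i) \<and> homog (ds ! i) (f i) \<and> ds ! i > 0) \<and>
     alg_indep (length ds) f \<and> integral_over (length ds) f"

end

theory Submission
  imports Defs "HOL-Computational_Algebra.Polynomial"
begin

text \<open>Consider the points (a X, 0, f) of V with f a binary cubic. On them the torus and the lower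
  unipotent subgroup of SL_2 act explicitly, and a weight count shows that invariants of degree
  2, 3 or 5 vanish there, while every invariant of degree 4 restricts to a linear combination of
  three fixed quartic invariants J, K, D. As (J, K, D) maps these points onto C^3, the two quartic
  members of a putative system of parameters have a common zero at which J, K or D is nonzero.
  All six parameters then vanish at this point, which is impossible: by integrality, a common zero
  of a homogeneous system of parameters is a zero of every homogeneous invariant of positive
  degree.\<close>

lemma coords_eq: "coords = {(1,0),(1,1),(2,0),(2,1),(2,2),(3,0),(3,1),(3,2),(3,3)}"
  unfolding coords_def by (auto simp: le_Suc_eq numeral_eq_Suc)

lemma finite_coords: "finite coords"
  by (simp add: coords_eq)

lemma act_explicit: "act (a, b, c, d) x = (\<lambda>p.
  if p = (1,0) then x(1,0)*a + x(1,1)*c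
  else if p = (1,1) then x(1,0)*b + x(1,1)*d
  else if p = (2,0) then x(2,0)*a^2 + x(2,1)*a*c + x(2,2)*c^2
  else if p = (2,1) then 2*a*b*x(2,0) + (a*d+b*c)*x(2,1) + 2*c*d*x(2,2)
  else if p = (2,2) then b^2*x(2,0) + b*d*x(2,1) + d^2*x(2,2)
  else if p = (3,0) then a^3*x(3,0) + a^2*c*x(3,1) + a*c^2*x(3,2) + c^3*x(3,3)
  else if p = (3,1) then
    3*a^2*b*x(3,0) + (a^2*d + 2*a*b*c)*x(3,1) + (2*a*c*d + b*c^2)*x(3,2) + 3*c^2*d*x(3,3)
  else if p = (3,2) then
    3*a*b^2*x(3,0) + (2*a*b*d + b^2*c)*x(3,1) + (a*d^2 + 2*b*c*d)*x(3,2) + 3*c*d^2*x(3,3)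
  else if p = (3,3) then b^3*x(3,0) + b^2*d*x(3,1) + b*d^2*x(3,2) + d^3*x(3,3)
  else 0)"
  by (rule ext)
    (auto simp: act_def coords_eq numeral_eq_Suc atMost_Suc algebra_simps
       power2_eq_square power3_eq_cube split: prod.splits)

lemma SL2_diagonalI: "t \<noteq> 0 \<Longrightarrow> (1/t, 0, 0, t) \<in> SL2"
  by (simp add: SL2_def)

lemma SL2_lower_unipotentI: "(1, 0, c, 1) \<in> SL2"
  by (simp add: SL2_def)

lemma invariant_act: "invariant F \<Longrightarrow> g \<in> SL2 \<Longrightarrow> x \<in> Vspace \<Longrightarrow> F (act g x) = F x"
  by (simp add: invariant_def)

lemma poly_fun_const: "poly_fun (\<lambda>x. k)"
  unfolding poly_fun_def
  by (rule exI[of _ "{\<lambda>_. 0}"], rule exI[of _ "\<lambda>_. k"]) (simp add: mono_def)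

lemma poly_fun_coord: "p \<in> coords \<Longrightarrow> poly_fun (\<lambda>x. x p)"
  unfolding poly_fun_def
proof (rule exI[of _ "{\<lambda>q. if q = p then 1 else 0}"], rule exI[of _ "\<lambda>_. 1"], intro conjI ballI)
  assume p: "p \<in> coords"
  fix x :: "nat \<times> nat \<Rightarrow> complex"
  have "mono (\<lambda>q. if q = p then 1 else 0) x = (\<Prod>q\<in>coords. if q = p then x q else 1)"
    unfolding mono_def by (rule prod.cong) auto
  also have "\<dots> = x p"
    using p by (simp add: prod.delta' finite_coords)
  finally show "x p = (\<Sum>e\<in>{\<lambda>q. if q = p then 1 else 0}. 1 * mono e x)"
    by simp
qed simp

lemma poly_fun_add:
  assumes "poly_fun F" "poly_fun G"
  shows "poly_fun (\<lambda>x. F x + G x)"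
proof -
  obtain M1 c1 where 1: "finite M1" "\<forall>x\<in>Vspace. F x = (\<Sum>e\<in>M1. c1 e * mono e x)"
    using assms(1) unfolding poly_fun_def by blast
  obtain M2 c2 where 2: "finite M2" "\<forall>x\<in>Vspace. G x = (\<Sum>e\<in>M2. c2 e * mono e x)"
    using assms(2) unfolding poly_fun_def by blast
  define c where "c e = (if e \<in> M1 then c1 e else 0) + (if e \<in> M2 then c2 e else 0)" for e
  have "F x + G x = (\<Sum>e\<in>M1 \<union> M2. c e * mono e x)" if "x \<in> Vspace" for x
  proof -
    have "(\<Sum>e\<in>M1 \<union> M2. c e * mono e x) =
        (\<Sum>e\<in>M1 \<union> M2. if e \<in> M1 then c1 e * mono e x else 0) +
        (\<Sum>e\<in>M1 \<union> M2. if e \<in> M2 then c2 e * mono e x else 0)"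
      by (subst sum.distrib[symmetric], rule sum.cong) (auto simp: c_def algebra_simps)
    also have "\<dots> = (\<Sum>e\<in>M1. c1 e * mono e x) + (\<Sum>e\<in>M2. c2 e * mono e x)"
      using 1(1) 2(1) by (simp add: sum.If_cases Int_absorb1 Int_absorb2)
    finally show ?thesis
      using 1(2) 2(2) that by simp
  qed
  then show ?thesis
    unfolding poly_fun_def using 1(1) 2(1) by blast
qed

lemma mono_add: "mono (\<lambda>q. e1 q + e2 q) x = mono e1 x * mono e2 x"
  by (simp add: mono_def power_add prod.distrib)

lemma poly_fun_mult:
  assumes "poly_fun F" "poly_fun G"
  shows "poly_fun (\<lambda>x. F x * G x)"
proof -
  obtain M1 c1 where 1: "finite M1" "\<forall>x\<in>Vspace. F x = (\<Sum>e\<in>M1. c1 e * mono e x)"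
    using assms(1) unfolding poly_fun_def by blast
  obtain M2 c2 where 2: "finite M2" "\<forall>x\<in>Vspace. G x = (\<Sum>e\<in>M2. c2 e * mono e x)"
    using assms(2) unfolding poly_fun_def by blast
  define g where "g = (\<lambda>(e1 :: nat \<times> nat \<Rightarrow> nat, e2). (\<lambda>q. e1 q + e2 q))"
  define S where "S = M1 \<times> M2"
  have fin: "finite S"
    using 1(1) 2(1) by (simp add: S_def)
  define c where "c f = (\<Sum>p\<in>{p\<in>S. g p = f}. c1 (fst p) * c2 (snd p))" for f
  have "F x * G x = (\<Sum>f\<in>g ` S. c f * mono f x)" if "x \<in> Vspace" for x
  proof -
    have "F x * G x = (\<Sum>p\<in>S. c1 (fst p) * c2 (snd p) * mono (g p) x)"
      using 1(2) 2(2) that unfolding S_def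
      by (simp add: sum_product sum.cartesian_product)
        (rule sum.cong, auto simp: g_def mono_add algebra_simps)
    also have "\<dots> = (\<Sum>f\<in>g ` S. \<Sum>p\<in>{p\<in>S. g p = f}. c1 (fst p) * c2 (snd p) * mono (g p) x)"
      by (rule sum.group[OF fin finite_imageI[OF fin] subset_refl, symmetric])
    also have "\<dots> = (\<Sum>f\<in>g ` S. c f * mono f x)"
      unfolding c_def sum_distrib_right by (rule sum.cong) auto
    finally show ?thesis .
  qed
  then show ?thesis
    unfolding poly_fun_def using fin by blast
qed

lemma poly_fun_diff:
  assumes "poly_fun F" "poly_fun G"
  shows "poly_fun (\<lambda>x. F x - G x)"
  using poly_fun_add[OF assms(1) poly_fun_mult[OF poly_fun_const assms(2)], of "-1"] by simp

lemma poly_fun_power: "poly_fun F \<Longrightarrow> poly_fun (\<lambda>x. F x ^ n)"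
  by (induction n) (simp_all add: poly_fun_const poly_fun_mult)

lemmas poly_fun_intros =
  poly_fun_const poly_fun_coord poly_fun_add poly_fun_mult poly_fun_diff poly_fun_power

lemma Vspace_scale: "x \<in> Vspace \<Longrightarrow> (\<lambda>p. t * x p) \<in> Vspace"
  by (simp add: Vspace_def)

lemma mono_scale: "mono e (\<lambda>p. t * x p) = t ^ mdeg e * mono e x"
  by (simp add: mono_def mdeg_def power_mult_distrib prod.distrib power_sum)

lemma homog_scale:
  assumes "homog d F" "x \<in> Vspace"
  shows "F (\<lambda>p. t * x p) = t^d * F x"
proof -
  obtain M c where M: "finite M" "\<forall>e\<in>M. mdeg e = d"
      "\<forall>x\<in>Vspace. F x = (\<Sum>e\<in>M. c e * mono e x)"
    using assms(1) unfolding homog_def by blast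
  have "F (\<lambda>p. t * x p) = (\<Sum>e\<in>M. c e * mono e (\<lambda>p. t * x p))"
    using M(3) Vspace_scale[OF assms(2)] by blast
  also have "\<dots> = (\<Sum>e\<in>M. t^d * (c e * mono e x))"
    by (rule sum.cong) (auto simp: mono_scale M(2))
  also have "\<dots> = t^d * F x"
    using M(3) assms(2) by (simp add: sum_distrib_left)
  finally show ?thesis .
qed

section \<open>Common zeros of a homogeneous system of parameters\<close>

lemma finite_roots_monic:
  fixes \<alpha> :: "nat \<Rightarrow> complex"
  shows "finite {z. z^m + (\<Sum>j<m. \<alpha> j * z^j) = 0}"
proof -
  define p where "p = monom 1 m + (\<Sum>j<m. monom (\<alpha> j) j)"
  have "coeff p m = 1"
    by (simp add: p_def coeff_sum)
  then have "finite {z. poly p z = 0}"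
    by (intro poly_roots_finite) auto
  then show ?thesis
    by (simp add: p_def poly_sum poly_monom)
qed

text \<open>Integrality over the parameters forces h(t x) to be a root of a monic polynomial
  whose coefficients are independent of t once all parameters vanish at x; so h(t x) = t^D h(x)
  takes only finitely many values.\<close>

lemma hsop_common_zero_is_null:
  assumes hsop: "hsop_degrees ds f" and x: "x \<in> Vspace" and zero: "\<forall>i<length ds. f i x = 0"
    and h: "invariant h" "\<And>t. h (\<lambda>p. t * x p) = t^D * h x" "D > 0"
  shows "h x = 0"
proof (rule ccontr)
  assume hx: "h x \<noteq> 0"
  let ?n = "length ds"
  obtain m A where A: "\<forall>j<m. A j \<in> gen_alg ?n f"
      "\<forall>y\<in>Vspace. h y ^ m + (\<Sum>j<m. A j y * h y ^ j) = 0"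
    using hsop h(1) unfolding hsop_degrees_def integral_over_def by blast
  have f_scaled: "f i (\<lambda>p. t * x p) = 0" if "i < ?n" for i t
    using hsop that homog_scale[OF _ x, of "ds!i" "f i" t] zero
    unfolding hsop_degrees_def by simp
  have "\<exists>a. \<forall>t. A j (\<lambda>p. t * x p) = a" if "j < m" for j
  proof -
    obtain M c where "\<forall>y\<in>Vspace. A j y = (\<Sum>e\<in>M. c e * (\<Prod>i<?n. f i y ^ e i))"
      using A(1) \<open>j < m\<close> unfolding gen_alg_def by blast
    then show ?thesis
      by (intro exI[of _ "\<Sum>e\<in>M. c e * (\<Prod>i<?n. (0::complex) ^ e i)"])
        (simp add: Vspace_scale[OF x] f_scaled)
  qed
  then obtain \<alpha> where \<alpha>: "\<And>j t. j < m \<Longrightarrow> A j (\<lambda>p. t * x p) = \<alpha> j"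
    by metis
  have root: "(t^D * h x)^m + (\<Sum>j<m. \<alpha> j * (t^D * h x)^j) = 0" for t
  proof -
    have "h (\<lambda>p. t * x p) ^ m + (\<Sum>j<m. A j (\<lambda>p. t * x p) * h (\<lambda>p. t * x p) ^ j) = 0"
      using A(2) Vspace_scale[OF x] by blast
    then show ?thesis
      by (simp add: h(2) \<alpha>)
  qed
  define g where "g n = (of_nat n)^D * h x" for n :: nat
  have "inj g"
  proof (rule injI)
    fix a b assume "g a = g b"
    then have "(of_nat a :: complex)^D = of_nat b ^D"
      using hx by (simp add: g_def)
    then have "a^D = b^D"
      by (metis of_nat_eq_iff of_nat_power)
    then show "a = b"
      using h(3) by (simp add: power_eq_iff_eq_base)
  qed
  then have "infinite (range g)"
    by (rule range_inj_infinite)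
  moreover have "range g \<subseteq> {z. z^m + (\<Sum>j<m. \<alpha> j * z^j) = 0}"
    using root by (auto simp: g_def)
  ultimately show False
    using finite_roots_monic finite_subset by blast
qed

section \<open>Invariants on the slice of linear forms and cubics\<close>

text \<open>The point (a X, 0, b0 X^3 + b1 X^2 Y + b2 X Y^2 + b3 Y^3) of V.\<close>

definition slice_pt ::
    "complex \<Rightarrow> complex \<Rightarrow> complex \<Rightarrow> complex \<Rightarrow> complex \<Rightarrow> nat \<times> nat \<Rightarrow> complex"
  where "slice_pt a b0 b1 b2 b3 = (\<lambda>p.
    if p = (1,0) then a else if p = (3,0) then b0 else if p = (3,1) then b1
    else if p = (3,2) then b2 else if p = (3,3) then b3 else 0)"

lemma slice_pt_in_Vspace: "slice_pt a b0 b1 b2 b3 \<in> Vspace"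
  by (auto simp: Vspace_def slice_pt_def coords_eq)

lemma mono_slice_pt: "mono e (slice_pt a b0 b1 b2 b3) =
    0^e(1,1) * 0^e(2,0) * 0^e(2,1) * 0^e(2,2) *
    a^e(1,0) * b0^e(3,0) * b1^e(3,1) * b2^e(3,2) * b3^e(3,3)"
  by (simp add: mono_def coords_eq slice_pt_def)

lemma mdeg_eq: "mdeg e = e(1,0) + e(1,1) + e(2,0) + e(2,1) + e(2,2) + e(3,0) + e(3,1) + e(3,2) + e(3,3)"
  by (simp add: mdeg_def coords_eq)

lemma scale_slice_pt: "(\<lambda>p. t * slice_pt a b0 b1 b2 b3 p) = slice_pt (t*a) (t*b0) (t*b1) (t*b2) (t*b3)"
  by (rule ext) (simp add: slice_pt_def)

lemma act_diagonal_slice_pt: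
  "t \<noteq> 0 \<Longrightarrow> act (1/t, 0, 0, t) (slice_pt t b0 b1 b2 b3) =
     slice_pt 1 (b0/t^3) (b1/t) (t*b2) (t^3*b3)"
  by (rule ext) (auto simp: act_explicit slice_pt_def field_simps power2_eq_square power3_eq_cube)

lemma act_lower_unipotent_slice_pt: "act (1, 0, c, 1) (slice_pt 1 b0 b1 b2 b3) =
    slice_pt 1 (b0 + c*b1 + c^2*b2 + c^3*b3) (b1 + 2*c*b2 + 3*c^2*b3) (b2 + 3*c*b3) b3"
  by (rule ext) (simp add: act_explicit slice_pt_def)

lemma invariant_slice_pt_diagonal:
  "invariant F \<Longrightarrow> t \<noteq> 0 \<Longrightarrow>
     F (slice_pt t b0 b1 b2 b3) = F (slice_pt 1 (b0/t^3) (b1/t) (t*b2) (t^3*b3))"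
  using invariant_act[OF _ SL2_diagonalI slice_pt_in_Vspace] act_diagonal_slice_pt by metis

lemma invariant_slice_pt_unipotent:
  "invariant F \<Longrightarrow>
     F (slice_pt 1 (b0 + c*b1 + c^2*b2 + c^3*b3) (b1 + 2*c*b2 + 3*c^2*b3) (b2 + 3*c*b3) b3) =
     F (slice_pt 1 b0 b1 b2 b3)"
  using invariant_act[OF _ SL2_lower_unipotentI slice_pt_in_Vspace] act_lower_unipotent_slice_pt
  by metis

lemma exponent_class_sum_zero:
  fixes C :: "'a \<Rightarrow> complex"
  assumes "finite M" and "\<And>t. t \<noteq> 0 \<Longrightarrow> (\<Sum>e\<in>M. C e * t^(k e)) = (\<Sum>e\<in>M. C e) * t^N"
    and "n \<noteq> N"
  shows "(\<Sum>e\<in>{e\<in>M. k e = n}. C e) = 0"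
proof -
  define p where "p = (\<Sum>e\<in>M. monom (C e) (k e)) - monom (\<Sum>e\<in>M. C e) N"
  have "p = 0"
  proof (rule ccontr)
    assume "p \<noteq> 0"
    then have "finite {t. poly p t = 0}"
      by (rule poly_roots_finite)
    moreover have "UNIV - {0} \<subseteq> {t. poly p t = 0}"
      using assms(2) by (auto simp: p_def poly_sum poly_monom)
    ultimately have "finite (UNIV - {0 :: complex})"
      by (rule finite_subset[rotated])
    then show False
      by (simp add: infinite_UNIV_char_0)
  qed
  then have "coeff p n = 0"
    by simp
  moreover have "coeff p n = (\<Sum>e\<in>M. if k e = n then C e else 0)"
    using assms(3) by (simp add: p_def coeff_sum coeff_monom)
  ultimately show ?thesis
    using assms(1) by (simp add: sum.inter_filter)
qed

text \<open>The diagonal element diag(1/t, t) maps t x, for x = slice_pt 1 b0 b1 b2 b3, to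
  slice_pt 1 (b0/t^2) b1 (t^2 b2) (t^4 b3). Comparing with F(t x) = t^d F(x), a monomial of degree d
  with exponents i, k, l on b0, b2, b3 survives in F(x) only if -2i + 2k + 4l = d, i.e.
  slice_weight d i k l = 3d.\<close>

definition slice_weight :: "nat \<Rightarrow> nat \<Rightarrow> nat \<Rightarrow> nat \<Rightarrow> nat"
  where "slice_weight d i k l = 2*k + 4*l + 2*(d - i)"

lemma invariant_homog_slice_pt_diagonal:
  assumes "invariant F" "homog d F" "t \<noteq> 0"
  shows "F (slice_pt 1 (b0/t^2) b1 (t^2*b2) (t^4*b3)) = t^d * F (slice_pt 1 b0 b1 b2 b3)"
proof -
  have "F (slice_pt 1 (b0/t^2) b1 (t^2*b2) (t^4*b3)) = F (slice_pt t (t*b0) (t*b1) (t*b2) (t*b3))"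
    using invariant_slice_pt_diagonal[OF assms(1,3)] assms(3)
    by (simp add: power2_eq_square power3_eq_cube power4_eq_xxxx mult.assoc)
  also have "\<dots> = t^d * F (slice_pt 1 b0 b1 b2 b3)"
    using homog_scale[OF assms(2) slice_pt_in_Vspace, of t 1] by (simp add: scale_slice_pt)
  finally show ?thesis .
qed

lemma mono_slice_pt_diagonal:
  assumes "t \<noteq> 0" "e(3,0) \<le> d"
  shows "mono e (slice_pt 1 (b0/t^2) b1 (t^2*b2) (t^4*b3)) * t^(2*d) =
         t^(slice_weight d (e(3,0)) (e(3,2)) (e(3,3))) * mono e (slice_pt 1 b0 b1 b2 b3)"
proof -
  have "2*d = 2*e(3,0) + 2*(d - e(3,0))"
    using assms(2) by simp
  then have "t^(2*d) = (t^2)^e(3,0) * t^(2*(d - e(3,0)))"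
    by (metis power_add power_mult)
  moreover have "(b0/t^2)^e(3,0) * (t^2)^e(3,0) = b0^e(3,0)"
    using assms(1) by (simp flip: power_mult_distrib)
  ultimately show ?thesis
    unfolding mono_slice_pt slice_weight_def
    by (simp add: power_mult_distrib power_add power_mult algebra_simps)
qed

lemma invariant_on_slice_weight_class:
  assumes inv: "invariant F" and hom: "homog d F"
  obtains M c where "finite M" "\<forall>e\<in>M. mdeg e = d"
    "\<And>b0 b1 b2 b3. F (slice_pt 1 b0 b1 b2 b3) =
       (\<Sum>e\<in>{e\<in>M. slice_weight d (e(3,0)) (e(3,2)) (e(3,3)) = 3*d}.
          c e * mono e (slice_pt 1 b0 b1 b2 b3))"
proof -
  obtain M c where M: "finite M" "\<forall>e\<in>M. mdeg e = d"
      "\<forall>x\<in>Vspace. F x = (\<Sum>e\<in>M. c e * mono e x)"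
    using hom unfolding homog_def by blast
  define k where "k e = slice_weight d (e(3,0)) (e(3,2)) (e(3,3))" for e :: "nat \<times> nat \<Rightarrow> nat"
  have "F (slice_pt 1 b0 b1 b2 b3) = (\<Sum>e\<in>{e\<in>M. k e = 3*d}. c e * mono e (slice_pt 1 b0 b1 b2 b3))"
    for b0 b1 b2 b3
  proof -
    define C where "C e = c e * mono e (slice_pt 1 b0 b1 b2 b3)" for e
    have F_slice: "F (slice_pt 1 b0 b1 b2 b3) = (\<Sum>e\<in>M. C e)"
      using M(3) slice_pt_in_Vspace by (simp add: C_def)
    have "(\<Sum>e\<in>M. C e * t^(k e)) = (\<Sum>e\<in>M. C e) * t^(3*d)" if t: "t \<noteq> 0" for t
    proof -
      have "e(3,0) \<le> d" if "e \<in> M" for e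
        using M(2) that by (auto simp: mdeg_eq)
      then have "(\<Sum>e\<in>M. C e * t^(k e)) =
          (\<Sum>e\<in>M. c e * (mono e (slice_pt 1 (b0/t^2) b1 (t^2*b2) (t^4*b3)) * t^(2*d)))"
        by (intro sum.cong refl, subst mono_slice_pt_diagonal[OF t]) (auto simp: C_def k_def)
      also have "\<dots> = (\<Sum>e\<in>M. c e * mono e (slice_pt 1 (b0/t^2) b1 (t^2*b2) (t^4*b3))) * t^(2*d)"
        by (simp add: sum_distrib_right mult.assoc)
      also have "\<dots> = F (slice_pt 1 (b0/t^2) b1 (t^2*b2) (t^4*b3)) * t^(2*d)"
        using M(3) slice_pt_in_Vspace by simp
      also have "\<dots> = (\<Sum>e\<in>M. C e) * t^(3*d)"
        by (simp add: invariant_homog_slice_pt_diagonal[OF inv hom t] F_slice power_add[symmetric])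
      finally show ?thesis .
    qed
    then have "(\<Sum>e\<in>{e\<in>M. k e = n}. C e) = 0" if "n \<noteq> 3*d" for n
      using exponent_class_sum_zero[OF M(1)] that by blast
    then have "(\<Sum>n\<in>insert (3*d) (k`M). \<Sum>e\<in>{e\<in>M. k e = n}. C e) =
        (\<Sum>e\<in>{e\<in>M. k e = 3*d}. C e)"
      using M(1) by (subst sum.remove[of _ "3*d"]) (auto intro!: sum.neutral)
    moreover have "(\<Sum>n\<in>insert (3*d) (k`M). \<Sum>e\<in>{e\<in>M. k e = n}. C e) = (\<Sum>e\<in>M. C e)"
      using M(1) by (intro sum.group) auto
    ultimately show ?thesis
      by (simp add: F_slice C_def)
  qed
  then show ?thesis
    using that[OF M(1,2)] unfolding k_def by blast
qed

definition cubic_coeff_monomial ::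
    "nat \<times> nat \<times> nat \<times> nat \<Rightarrow> complex \<Rightarrow> complex \<Rightarrow> complex \<Rightarrow> complex \<Rightarrow> complex"
  where "cubic_coeff_monomial w b0 b1 b2 b3 = (case w of (i, j, k, l) \<Rightarrow> b0^i * b1^j * b2^k * b3^l)"

lemma invariant_on_slice_support:
  assumes inv: "invariant F" and hom: "homog d F" and "finite W"
    and W: "\<And>i j k l. i + j + k + l \<le> d \<Longrightarrow> slice_weight d i k l = 3*d \<Longrightarrow> (i, j, k, l) \<in> W"
  obtains q where "\<And>b0 b1 b2 b3.
    F (slice_pt 1 b0 b1 b2 b3) = (\<Sum>w\<in>W. q w * cubic_coeff_monomial w b0 b1 b2 b3)"
proof -
  obtain M c where M: "finite M" "\<forall>e\<in>M. mdeg e = d"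
    and F: "\<And>b0 b1 b2 b3. F (slice_pt 1 b0 b1 b2 b3) =
       (\<Sum>e\<in>{e\<in>M. slice_weight d (e(3,0)) (e(3,2)) (e(3,3)) = 3*d}.
          c e * mono e (slice_pt 1 b0 b1 b2 b3))"
    using invariant_on_slice_weight_class[OF inv hom] by blast
  define S where "S = {e\<in>M. slice_weight d (e(3,0)) (e(3,2)) (e(3,3)) = 3*d}"
  define \<tau> where "\<tau> e = (e(3,0), e(3,1), e(3,2), e(3,3))" for e :: "nat \<times> nat \<Rightarrow> nat"
  have "finite S"
    using M(1) by (simp add: S_def)
  have "\<tau> ` S \<subseteq> W"
  proof
    fix w assume "w \<in> \<tau> ` S"
    then obtain e where e: "e \<in> S" "w = \<tau> e"
      by blast
    then have "mdeg e = d"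
      using M(2) by (simp add: S_def)
    then have "e(3,0) + e(3,1) + e(3,2) + e(3,3) \<le> d"
      by (simp add: mdeg_eq)
    with e show "w \<in> W"
      using W by (simp add: S_def \<tau>_def)
  qed
  define q where "q w = (\<Sum>e\<in>{e\<in>S. \<tau> e = w}. c e * 0^e(1,1) * 0^e(2,0) * 0^e(2,1) * 0^e(2,2))"
    for w
  have "F (slice_pt 1 b0 b1 b2 b3) = (\<Sum>w\<in>W. q w * cubic_coeff_monomial w b0 b1 b2 b3)"
    for b0 b1 b2 b3
  proof -
    have "F (slice_pt 1 b0 b1 b2 b3) = (\<Sum>e\<in>S. c e * 0^e(1,1) * 0^e(2,0) * 0^e(2,1) * 0^e(2,2) *
        cubic_coeff_monomial (\<tau> e) b0 b1 b2 b3)"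
      unfolding F S_def[symmetric]
      by (rule sum.cong) (simp_all add: mono_slice_pt cubic_coeff_monomial_def \<tau>_def mult.assoc)
    also have "\<dots> = (\<Sum>w\<in>W. q w * cubic_coeff_monomial w b0 b1 b2 b3)"
      unfolding q_def sum_distrib_right
      by (subst sum.group[OF \<open>finite S\<close> \<open>finite W\<close> \<open>\<tau> ` S \<subseteq> W\<close>, symmetric])
        (rule sum.cong, auto)
    finally show ?thesis .
  qed
  then show ?thesis
    using that by blast
qed

lemma slice_weight_odd: "odd d \<Longrightarrow> slice_weight d i k l \<noteq> 3*d"
  unfolding slice_weight_def by presburger

lemma slice_weight_deg2:
  assumes "i + j + k + l \<le> 2" "slice_weight 2 i k l = 3*2"
  shows "(i, j, k, l) \<in> {(0,0,1,0), (1,0,0,1), (0,1,1,0)}"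
proof -
  have "k + 2*l = 1 + i" "l \<le> 1" "i \<le> 2"
    using assms unfolding slice_weight_def by linarith+
  then have "i = 0 \<or> i = 1 \<or> i = 2" "l = 0 \<or> l = 1"
    by auto
  then show ?thesis
    using assms(1) \<open>k + 2*l = 1 + i\<close> by (elim disjE) (simp_all add: le_Suc_eq numeral_eq_Suc)
qed

lemma slice_weight_deg4:
  assumes "i + j + k + l \<le> 4" "slice_weight 4 i k l = 3*4"
  shows "(i, j, k, l) \<in> {(0,0,0,1), (0,1,0,1), (0,2,0,1), (0,3,0,1), (1,0,1,1), (1,1,1,1),
    (2,0,0,2), (0,0,2,0), (0,1,2,0), (0,2,2,0), (1,0,3,0)}"
proof -
  have "k + 2*l = 2 + i" "i \<le> 2" "l \<le> 2"
    using assms unfolding slice_weight_def by linarith+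
  then have "i = 0 \<or> i = 1 \<or> i = 2" "l = 0 \<or> l = 1 \<or> l = 2"
    by auto
  then show ?thesis
    using assms(1) \<open>k + 2*l = 2 + i\<close> by (elim disjE) (simp_all add: le_Suc_eq numeral_eq_Suc)
qed

lemma isCont_slice_pt_line:
  assumes "poly_fun F"
  shows "isCont (\<lambda>t. F (slice_pt t b0 b1 b2 b3)) z"
proof -
  obtain M c where "\<forall>x\<in>Vspace. F x = (\<Sum>e\<in>M. c e * mono e x)"
    using assms unfolding poly_fun_def by blast
  then have line: "(\<lambda>t. F (slice_pt t b0 b1 b2 b3)) = (\<lambda>t. \<Sum>e\<in>M. c e *
      (0^e(1,1) * 0^e(2,0) * 0^e(2,1) * 0^e(2,2) *
       t^e(1,0) * b0^e(3,0) * b1^e(3,1) * b2^e(3,2) * b3^e(3,3)))"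
    using slice_pt_in_Vspace by (simp add: mono_slice_pt)
  show ?thesis
    unfolding line by (intro continuous_intros)
qed

lemma slice_pt_zero_by_continuity:
  assumes "poly_fun F" "\<And>t. t \<noteq> 0 \<Longrightarrow> F (slice_pt t b0 b1 b2 b3) = g t" "isCont g 0"
  shows "F (slice_pt 0 b0 b1 b2 b3) = g 0"
proof -
  let ?h = "\<lambda>t. F (slice_pt t b0 b1 b2 b3)"
  have "eventually (\<lambda>t. g t = ?h t) (at (0 :: complex))"
    using assms(2) by (auto simp: eventually_at_filter)
  then have "(?h \<longlongrightarrow> g 0) (at 0)"
    using assms(3) tendsto_cong by (fastforce simp: isCont_def)
  moreover have "(?h \<longlongrightarrow> ?h 0) (at 0)"
    using isCont_slice_pt_line[OF assms(1)] by (simp add: isCont_def)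
  ultimately show ?thesis
    using tendsto_unique[OF at_neq_bot] by blast
qed

lemma invariant_vanishes_on_slice:
  assumes "invariant F" "\<And>b0 b1 b2 b3. F (slice_pt 1 b0 b1 b2 b3) = 0"
  shows "F (slice_pt a b0 b1 b2 b3) = 0"
proof (cases "a = 0")
  case True
  have "F (slice_pt 0 b0 b1 b2 b3) = 0"
  proof (rule slice_pt_zero_by_continuity[where g = "\<lambda>_. 0"])
    show "poly_fun F"
      using assms(1) by (simp add: invariant_def)
    show "F (slice_pt t b0 b1 b2 b3) = 0" if "t \<noteq> 0" for t
      using invariant_slice_pt_diagonal[OF assms(1) that] assms(2) by simp
  qed simp
  with True show ?thesis
    by blast
next
  case False
  then show ?thesis
    using invariant_slice_pt_diagonal[OF assms(1) False] assms(2) by simp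
qed

lemma odd_invariant_vanishes_on_slice:
  assumes "invariant F" "homog d F" "odd d"
  shows "F (slice_pt a b0 b1 b2 b3) = 0"
proof (rule invariant_vanishes_on_slice[OF assms(1)])
  obtain q where "\<And>b0 b1 b2 b3. F (slice_pt 1 b0 b1 b2 b3) =
      (\<Sum>w\<in>{}. q w * cubic_coeff_monomial w b0 b1 b2 b3)"
    using invariant_on_slice_support[OF assms(1,2)] slice_weight_odd[OF assms(3)] by blast
  then show "F (slice_pt 1 b0 b1 b2 b3) = 0" for b0 b1 b2 b3
    by simp
qed

lemma quadratic_invariant_vanishes_on_slice:
  assumes "invariant F" "homog 2 F"
  shows "F (slice_pt a b0 b1 b2 b3) = 0"
proof (rule invariant_vanishes_on_slice[OF assms(1)])
  obtain q where q: "\<And>b0 b1 b2 b3. F (slice_pt 1 b0 b1 b2 b3) =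
      (\<Sum>w\<in>{(0,0,1,0), (1,0,0,1), (0,1,1,0)}. q w * cubic_coeff_monomial w b0 b1 b2 b3)"
    using invariant_on_slice_support[OF assms _ slice_weight_deg2] by blast
  have F: "F (slice_pt 1 b0 b1 b2 b3) = q (0,0,1,0) * b2 + q (1,0,0,1) * b0 * b3 + q (0,1,1,0) * b1 * b2"
    for b0 b1 b2 b3
    unfolding q by (simp add: cubic_coeff_monomial_def)
  have "q (0,0,1,0) = 0 \<and> q (1,0,0,1) = 0 \<and> q (0,1,1,0) = 0"
    using invariant_slice_pt_unipotent[OF assms(1), of 0 1 0 0 1]
      invariant_slice_pt_unipotent[OF assms(1), of 0 1 1 0 1]
      invariant_slice_pt_unipotent[OF assms(1), of 0 2 0 0 1]
    unfolding F by simp algebra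
  then show "F (slice_pt 1 b0 b1 b2 b3) = 0" for b0 b1 b2 b3
    by (simp add: F)
qed

section \<open>The quartic invariants\<close>

text \<open>For the linear form y0 X + y1 Y and the cubic form b0 X^3 + b1 X^2 Y + b2 X Y^2 + b3 Y^3:
  the cubic and its Hessian evaluated at the root (y1, -y0) of the linear form, and the
  discriminant of the cubic.\<close>

definition cubic_at_root :: "(nat \<times> nat \<Rightarrow> complex) \<Rightarrow> complex"
  where "cubic_at_root x =
    x(3,0)*x(1,1)^3 - x(3,1)*x(1,1)^2*x(1,0) + x(3,2)*x(1,1)*x(1,0)^2 - x(3,3)*x(1,0)^3"

definition hessian_at_root :: "(nat \<times> nat \<Rightarrow> complex) \<Rightarrow> complex"
  where "hessian_at_root x =
    (3*x(3,0)*x(3,2) - x(3,1)^2)*x(1,1)^2 - (9*x(3,0)*x(3,3) - x(3,1)*x(3,2))*x(1,1)*x(1,0) +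
    (3*x(3,1)*x(3,3) - x(3,2)^2)*x(1,0)^2"

definition discriminant :: "(nat \<times> nat \<Rightarrow> complex) \<Rightarrow> complex"
  where "discriminant x =
    x(3,1)^2*x(3,2)^2 - 4*x(3,0)*x(3,2)^3 - 4*x(3,1)^3*x(3,3) - 27*x(3,0)^2*x(3,3)^2 +
    18*x(3,0)*x(3,1)*x(3,2)*x(3,3)"

lemma invariantI_det_power:
  assumes "poly_fun F" "\<And>a b c d x. F (act (a, b, c, d) x) = (a*d - b*c)^n * F x"
  shows "invariant F"
  unfolding invariant_def using assms by (auto simp: SL2_def)

lemma invariant_cubic_at_root: "invariant cubic_at_root"
proof (rule invariantI_det_power)
  show "poly_fun cubic_at_root"
    unfolding cubic_at_root_def by (intro poly_fun_intros) (simp_all add: coords_eq)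
  show "cubic_at_root (act (a, b, c, d) x) = (a*d - b*c)^3 * cubic_at_root x" for a b c d x
    unfolding cubic_at_root_def act_explicit by simp algebra
qed

lemma invariant_hessian_at_root: "invariant hessian_at_root"
proof (rule invariantI_det_power)
  show "poly_fun hessian_at_root"
    unfolding hessian_at_root_def by (intro poly_fun_intros) (simp_all add: coords_eq)
  show "hessian_at_root (act (a, b, c, d) x) = (a*d - b*c)^4 * hessian_at_root x" for a b c d x
    unfolding hessian_at_root_def act_explicit by simp algebra
qed

lemma invariant_discriminant: "invariant discriminant"
proof (rule invariantI_det_power)
  show "poly_fun discriminant"
    unfolding discriminant_def by (intro poly_fun_intros) (simp_all add: coords_eq)
  show "discriminant (act (a, b, c, d) x) = (a*d - b*c)^6 * discriminant x" for a b c d x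
    unfolding discriminant_def act_explicit by simp algebra
qed

lemma cubic_at_root_scale: "cubic_at_root (\<lambda>p. t * x p) = t^4 * cubic_at_root x"
  unfolding cubic_at_root_def by algebra

lemma hessian_at_root_scale: "hessian_at_root (\<lambda>p. t * x p) = t^4 * hessian_at_root x"
  unfolding hessian_at_root_def by algebra

lemma discriminant_scale: "discriminant (\<lambda>p. t * x p) = t^4 * discriminant x"
  unfolding discriminant_def by algebra

lemma quartic_invariant_on_slice:
  assumes inv: "invariant F" and hom: "homog 4 F"
  obtains qJ qK qD where "\<And>a b0 b1 b2 b3. F (slice_pt a b0 b1 b2 b3) =
    qJ * cubic_at_root (slice_pt a b0 b1 b2 b3) + qK * hessian_at_root (slice_pt a b0 b1 b2 b3) +
    qD * discriminant (slice_pt a b0 b1 b2 b3)"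
proof -
  obtain q where q: "\<And>b0 b1 b2 b3. F (slice_pt 1 b0 b1 b2 b3) =
      (\<Sum>w\<in>{(0,0,0,1), (0,1,0,1), (0,2,0,1), (0,3,0,1), (1,0,1,1), (1,1,1,1),
        (2,0,0,2), (0,0,2,0), (0,1,2,0), (0,2,2,0), (1,0,3,0)}.
        q w * cubic_coeff_monomial w b0 b1 b2 b3)"
    using invariant_on_slice_support[OF inv hom _ slice_weight_deg4] by blast
  have F: "F (slice_pt 1 b0 b1 b2 b3) =
      q (0,0,0,1)*b3 + q (0,1,0,1)*b1*b3 + q (0,2,0,1)*b1^2*b3 + q (0,3,0,1)*b1^3*b3 +
      q (1,0,1,1)*b0*b2*b3 + q (1,1,1,1)*b0*b1*b2*b3 + q (2,0,0,2)*b0^2*b3^2 + q (0,0,2,0)*b2^2 +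
      q (0,1,2,0)*b1*b2^2 + q (0,2,2,0)*b1^2*b2^2 + q (1,0,3,0)*b0*b2^3" for b0 b1 b2 b3
    unfolding q by (simp add: cubic_coeff_monomial_def)
  define qJ qK qD where "qJ = - q (0,0,0,1)" and "qK = q (0,1,0,1) / 3" and "qD = q (0,2,2,0)"
  define G where "G x = F x - (qJ * cubic_at_root x + qK * hessian_at_root x + qD * discriminant x)"
    for x
  have "invariant G"
    using inv invariant_cubic_at_root invariant_hessian_at_root invariant_discriminant
    unfolding invariant_def G_def by (auto intro!: poly_fun_intros)
  txt \<open>Eight unipotent translates give enough linear relations among the eleven coefficients
    to confine F to the span of the three quartic invariants.\<close>
  moreover have "G (slice_pt 1 b0 b1 b2 b3) = 0" for b0 b1 b2 b3
    using invariant_slice_pt_unipotent[OF inv, of 0 "-1" 1 1 0]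
      invariant_slice_pt_unipotent[OF inv, of 0 1 0 1 0]
      invariant_slice_pt_unipotent[OF inv, of 0 "-1" 0 1 1]
      invariant_slice_pt_unipotent[OF inv, of 1 "-1" 0 0 1]
      invariant_slice_pt_unipotent[OF inv, of 1 "-1" 0 1 1]
      invariant_slice_pt_unipotent[OF inv, of 1 "-1" 1 0 1]
      invariant_slice_pt_unipotent[OF inv, of 0 1 0 0 1]
      invariant_slice_pt_unipotent[OF inv, of 0 1 0 1 1]
    unfolding G_def F qJ_def qK_def qD_def
    by (simp add: cubic_at_root_def hessian_at_root_def discriminant_def slice_pt_def) algebra
  ultimately have "G (slice_pt a b0 b1 b2 b3) = 0" for a b0 b1 b2 b3
    by (rule invariant_vanishes_on_slice)
  then show ?thesis
    using that by (simp add: G_def)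
qed

lemma slice_values_onto:
  "\<exists>a b0 b1 b2 b3. cubic_at_root (slice_pt a b0 b1 b2 b3) = u \<and>
     hessian_at_root (slice_pt a b0 b1 b2 b3) = v \<and> discriminant (slice_pt a b0 b1 b2 b3) = w"
proof -
  consider "u \<noteq> 0" | "u = 0" "v \<noteq> 0" | "u = 0" "v = 0"
    by blast
  then show ?thesis
  proof cases
    case 1
    define b1 where "b1 = - v / (3*u)"
    define b0 where "b0 = csqrt ((4*b1^3*u - w) / (27*u^2))"
    have "b0^2 = (4*b1^3*u - w) / (27*u^2)"
      unfolding b0_def by (rule power2_csqrt)
    then have "cubic_at_root (slice_pt 1 b0 b1 0 (-u)) = u \<and>
        hessian_at_root (slice_pt 1 b0 b1 0 (-u)) = v \<and> discriminant (slice_pt 1 b0 b1 0 (-u)) = w"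
      using 1 by (simp add: cubic_at_root_def hessian_at_root_def discriminant_def slice_pt_def
          b1_def field_simps power2_eq_square power3_eq_cube)
    then show ?thesis
      by blast
  next
    case 2
    define b2 where "b2 = csqrt (-v)"
    have b2: "b2^2 = -v"
      unfolding b2_def by (rule power2_csqrt)
    with 2 have "b2 \<noteq> 0"
      by auto
    then have "cubic_at_root (slice_pt 1 (-w / (4*b2^3)) 0 b2 0) = u \<and>
        hessian_at_root (slice_pt 1 (-w / (4*b2^3)) 0 b2 0) = v \<and>
        discriminant (slice_pt 1 (-w / (4*b2^3)) 0 b2 0) = w"
      using 2 b2 by (simp add: cubic_at_root_def hessian_at_root_def discriminant_def slice_pt_def
          field_simps)
    then show ?thesis
      by blast
  next
    case 3
    define b3 where "b3 = csqrt (-w/27)"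
    have "b3^2 = -w/27"
      unfolding b3_def by (rule power2_csqrt)
    then have "cubic_at_root (slice_pt 0 1 0 0 b3) = u \<and> hessian_at_root (slice_pt 0 1 0 0 b3) = v \<and>
        discriminant (slice_pt 0 1 0 0 b3) = w"
      using 3 by (simp add: cubic_at_root_def hessian_at_root_def discriminant_def slice_pt_def)
    then show ?thesis
      by blast
  qed
qed

lemma linear_forms_common_nonzero_root:
  fixes a1 a2 a3 b1 b2 b3 :: "'a :: field"
  shows "\<exists>u v w. (u, v, w) \<noteq> (0, 0, 0) \<and> a1*u + a2*v + a3*w = 0 \<and> b1*u + b2*v + b3*w = 0"
proof (cases "(a2*b3 - a3*b2, a3*b1 - a1*b3, a1*b2 - a2*b1) = (0, 0, 0)")
  case False
  then show ?thesis
    by (intro exI[of _ "a2*b3 - a3*b2"] exI[of _ "a3*b1 - a1*b3"] exI[of _ "a1*b2 - a2*b1"])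
      (simp add: algebra_simps)
next
  case minors: True
  consider "(a1, a2) \<noteq> (0, 0)" | "(b1, b2) \<noteq> (0, 0)" | "a1 = 0" "a2 = 0" "b1 = 0" "b2 = 0"
    by auto
  then show ?thesis
  proof cases
    case 1
    then show ?thesis
      using minors by (intro exI[of _ a2] exI[of _ "-a1"] exI[of _ 0]) (auto simp: algebra_simps)
  next
    case 2
    then show ?thesis
      using minors by (intro exI[of _ b2] exI[of _ "-b1"] exI[of _ 0]) (auto simp: algebra_simps)
  next
    case 3
    then show ?thesis
      by (intro exI[of _ 1] exI[of _ 0] exI[of _ 0]) simp
  qed
qed

lemma quartic_invariants_common_zero_on_slice:
  assumes "invariant F" "homog 4 F" "invariant G" "homog 4 G"
  obtains a b0 b1 b2 b3 where "F (slice_pt a b0 b1 b2 b3) = 0" "G (slice_pt a b0 b1 b2 b3) = 0"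
    "(cubic_at_root (slice_pt a b0 b1 b2 b3), hessian_at_root (slice_pt a b0 b1 b2 b3),
      discriminant (slice_pt a b0 b1 b2 b3)) \<noteq> (0, 0, 0)"
proof -
  obtain qJ qK qD where F: "\<And>a b0 b1 b2 b3. F (slice_pt a b0 b1 b2 b3) =
      qJ * cubic_at_root (slice_pt a b0 b1 b2 b3) + qK * hessian_at_root (slice_pt a b0 b1 b2 b3) +
      qD * discriminant (slice_pt a b0 b1 b2 b3)"
    using quartic_invariant_on_slice[OF assms(1,2)] by blast
  obtain rJ rK rD where G: "\<And>a b0 b1 b2 b3. G (slice_pt a b0 b1 b2 b3) =
      rJ * cubic_at_root (slice_pt a b0 b1 b2 b3) + rK * hessian_at_root (slice_pt a b0 b1 b2 b3) +
      rD * discriminant (slice_pt a b0 b1 b2 b3)"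
    using quartic_invariant_on_slice[OF assms(3,4)] by blast
  obtain u v w where uvw: "(u, v, w) \<noteq> (0, 0, 0)" "qJ*u + qK*v + qD*w = 0" "rJ*u + rK*v + rD*w = 0"
    using linear_forms_common_nonzero_root by blast
  obtain a b0 b1 b2 b3 where "cubic_at_root (slice_pt a b0 b1 b2 b3) = u"
      "hessian_at_root (slice_pt a b0 b1 b2 b3) = v" "discriminant (slice_pt a b0 b1 b2 b3) = w"
    using slice_values_onto by blast
  then show ?thesis
    using that[of a b0 b1 b2 b3] uvw by (simp add: F G)
qed

theorem mainTheorem7:
  shows "\<not> (\<exists>f. hsop_degrees [2, 3, 3, 4, 4, 5] f)"
proof
  assume "\<exists>f. hsop_degrees [2, 3, 3, 4, 4, 5] f"
  then obtain f where hsop: "hsop_degrees [2, 3, 3, 4, 4, 5] f" ..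
  then have f: "invariant (f i) \<and> homog ([2, 3, 3, 4, 4, 5] ! i) (f i)" if "i < 6" for i
    using that unfolding hsop_degrees_def by auto
  obtain a b0 b1 b2 b3
    where zero34: "f 3 (slice_pt a b0 b1 b2 b3) = 0" "f 4 (slice_pt a b0 b1 b2 b3) = 0"
    and nonnull: "(cubic_at_root (slice_pt a b0 b1 b2 b3), hessian_at_root (slice_pt a b0 b1 b2 b3),
      discriminant (slice_pt a b0 b1 b2 b3)) \<noteq> (0, 0, 0)"
    by (rule quartic_invariants_common_zero_on_slice[of "f 3" "f 4"])
      (use f[of 3] f[of 4] in auto)
  have "f i (slice_pt a b0 b1 b2 b3) = 0" if "i < 6" for i
  proof -
    have "i \<in> {0, 1, 2, 5} \<or> i \<in> {3, 4}"
      using that by auto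
    then show ?thesis
      using f[of i] zero34 quadratic_invariant_vanishes_on_slice odd_invariant_vanishes_on_slice
      by auto
  qed
  then have "\<forall>i<length [2, 3, 3, 4, 4, 5 :: nat]. f i (slice_pt a b0 b1 b2 b3) = 0"
    by simp
  note null = hsop_common_zero_is_null[OF hsop slice_pt_in_Vspace this]
  show False
    using nonnull null[OF invariant_cubic_at_root cubic_at_root_scale]
      null[OF invariant_hessian_at_root hessian_at_root_scale]
      null[OF invariant_discriminant discriminant_scale] by simp
qed

end
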